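(* Let $F$ be a sensori-computational device and $N\subseteq Y(F)$ such that every nonempty string $s_1s_2\cdots s_k\in\mathcal{L}(F)$ has $s_1\in Y(F)\setminus N$. Then there exists a sensori-computational device that output simulates $F$ modulo the $N$-pump $P_N$ if and only if there exists a sensori-computational device that output simulates $F$ modulo the $N$-shrink $\pi_N$ (both taken with $L=\mathcal{L}(F)$, $\Sigma=Y(F)$).
   Context: A sensori-computational device is a 6-tuple $F=(V,V_0,Y,\tau,C,c)$ where $V$ is a non-empty finite set of states, $V_0\subseteq V$ a non-empty set of initial states, $Y=Y(F)$ a finite set of observations, $\tau:V\times V\to\mathcal{P}(Y)$, $C$ a set of outputs, $c:V\to\mathcal{P}(C)\setminus\{\emptyset\}$. A string $y_1\cdots y_n$ reaches $w$ from $v$ if there are states $w_0=v,\dots,w_n=w$ with $y_i\in\tau(w_{i-1},w_i)$; $\mathcal{R}_F(s)$ is the set of states reached by $s$ from some initial state; $\mathcal{L}(F)=\{s\in Y^*:\mathcal{R}_F(s)\ne\emptyset\}$; $\mathcal{C}_F(s)=\bigcup_{v\in\mathcal{R}_F(s)}c(v)$. For a relation $R\subseteq A\times B$ between sets of strings, $F'$ output simulates $F$ modulo $R$ if for every $s\in\mathcal{L}(F)$: (1) some $t\in\mathcal{L}(F')$ has $s\,R\,t$; (2) every $t\in B$ with $s\,R\,t$ satisfies $t\in\mathcal{L}(F')$ and $\mathcal{C}_F(s)\supseteq\mathcal{C}_{F'}(t)$. For a set $\Sigma$, $L\subseteq\Sigma^*$ and $N\subseteq\Sigma$: the $N$-shrink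 is the function $\pi_N:L\to(\Sigma\setminus N)^*$ deleting every occurrence of symbols of $N$ from a string (so $\pi_N(\epsilon)=\epsilon$). The $N$-pump is the relation $P_N\subseteq L\times\Sigma^*$ defined as the smallest relation such that $\epsilon\,P_N\,\epsilon$, $s\,P_N\,s$ for every $s\in L$, and whenever $s\,P_N\,t_1\cdots t_\ell$, then $s\,P_N\,t_1\cdots t_k\,b\,t_{k+1}\cdots t_\ell$ for every $b\in N$ and $k\in\{1,\dots,\ell\}$. *)

theory Defs
  imports Main
begin

text \<open>A sensori-computational device F = (V, V0, Y, tau, C, c).
  State type 'v, observation type 'y, output type 'c.\<close>
record ('v, 'y, 'c) scd =
  states :: "'v set"
  init   :: "'v set"
  obs    :: "'y set"
  trans  :: "'v \<Rightarrow> 'v \<Rightarrow> 'y set"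
  outs   :: "'c set"
  outf   :: "'v \<Rightarrow> 'c set"

definition scd_wf :: "('v, 'y, 'c) scd \<Rightarrow> bool" where
  "scd_wf F \<longleftrightarrow>
     finite (states F) \<and> states F \<noteq> {} \<and>
     init F \<subseteq> states F \<and> init F \<noteq> {} \<and>
     finite (obs F) \<and>
     (\<forall>v\<in>states F. \<forall>w\<in>states F. trans F v w \<subseteq> obs F) \<and>
     (\<forall>v\<in>states F. outf F v \<subseteq> outs F \<and> outf F v \<noteq> {})"

fun reaches :: "('v, 'y, 'c) scd \<Rightarrow> 'v \<Rightarrow> 'y list \<Rightarrow> 'v \<Rightarrow> bool" where
  "reaches F v [] w \<longleftrightarrow> v = w"
| "reaches F v (y # s) w \<longleftrightarrow> (\<exists>u\<in>states F. y \<in> trans F v u \<and> reaches F u s w)"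

definition reached :: "('v, 'y, 'c) scd \<Rightarrow> 'y list \<Rightarrow> 'v set" where
  "reached F s = {w \<in> states F. \<exists>v\<in>init F. reaches F v s w}"

definition lang :: "('v, 'y, 'c) scd \<Rightarrow> 'y list set" where
  "lang F = {s. set s \<subseteq> obs F \<and> reached F s \<noteq> {}}"

definition outputs :: "('v, 'y, 'c) scd \<Rightarrow> 'y list \<Rightarrow> 'c set" where
  "outputs F s = (\<Union>v\<in>reached F s. outf F v)"

definition output_simulates ::
  "('w, 'y, 'c) scd \<Rightarrow> ('v, 'y, 'c) scd \<Rightarrow> ('y list \<Rightarrow> 'y list \<Rightarrow> bool) \<Rightarrow> bool" where
  "output_simulates F' F R \<longleftrightarrow>
     (\<forall>s\<in>lang F. (\<exists>t\<in>lang F'. R s t) \<and>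
                 (\<forall>t. R s t \<longrightarrow> t \<in> lang F' \<and> outputs F' t \<subseteq> outputs F s))"

text \<open>The N-shrink on L, as a relation (graph of the function).\<close>
definition shrink :: "'y list set \<Rightarrow> 'y set \<Rightarrow> 'y list \<Rightarrow> 'y list \<Rightarrow> bool" where
  "shrink L N s t \<longleftrightarrow> s \<in> L \<and> t = filter (\<lambda>x. x \<notin> N) s"

inductive pump :: "'y list set \<Rightarrow> 'y set \<Rightarrow> 'y list \<Rightarrow> 'y list \<Rightarrow> bool"
  for L :: "'y list set" and N :: "'y set" where
  pump_eps: "pump L N [] []"
| pump_refl: "s \<in> L \<Longrightarrow> pump L N s s"
| pump_ins: "pump L N s t \<Longrightarrow> b \<in> N \<Longrightarrow> 1 \<le> k \<Longrightarrow> k \<le> length t \<Longrightarrow>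
             pump L N s (take k t @ b # drop k t)"

end

theory Submission
  imports Defs
begin

text \<open>
  (\<open>\<Leftarrow>\<close>) From a simulator \<open>G\<close> modulo the shrink, delete every \<open>N\<close>-labelled transition and
  add \<open>N\<close>-labelled self-loops at all states. The new device reads every string exactly as \<open>G\<close>
  reads its \<open>N\<close>-shrink, and pumping does not change the shrink.

  (\<open>\<Rightarrow>\<close>) Reading \<open>t\<close>, a simulator modulo the shrink may only emit outputs common to all
  \<open>s \<in> L(F)\<close> with shrink \<open>t\<close>. The family of the sets \<open>R\<^sub>F(s)\<close> for these \<open>s\<close> is computed
  from \<open>t\<close> by a deterministic subset construction: since no string of \<open>L(F)\<close> begins with a
  letter of \<open>N\<close>, every letter of \<open>N\<close> can be charged to the last letter of the shrink read before
  it. The common outputs of the family are nonempty when a simulator \<open>F'\<close> modulo the pump exists: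
  finitely many strings realise the whole family, they share their first letter, and inserting
  letters of \<open>N\<close> after it pads them all to one string, whose outputs in \<open>F'\<close> are outputs of each
  of them.
\<close>

abbreviation erase :: "'y set \<Rightarrow> 'y list \<Rightarrow> 'y list" where
  "erase N \<equiv> filter (\<lambda>x. x \<notin> N)"

lemma reaches_append:
  "reaches F v (s @ u) w \<longleftrightarrow> (\<exists>m. reaches F v s m \<and> reaches F m u w)"
  by (induction s arbitrary: v) auto

lemma reaches_in_states:
  "reaches F v s w \<Longrightarrow> v \<in> states F \<Longrightarrow> w \<in> states F"
  by (induction s arbitrary: v) auto

lemma reaches_obs:
  "scd_wf F \<Longrightarrow> v \<in> states F \<Longrightarrow> reaches F v s w \<Longrightarrow> set s \<subseteq> obs F"
proof (induction s arbitrary: v)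
  case (Cons y s)
  then obtain u where u: "u \<in> states F" "y \<in> trans F v u" "reaches F u s w" by auto
  then have "y \<in> obs F" using Cons.prems(1,2) unfolding scd_wf_def by blast
  then show ?case using Cons.IH[OF Cons.prems(1) u(1,3)] by simp
qed simp

lemma reached_subset_states: "reached F s \<subseteq> states F"
  unfolding reached_def by auto

lemma lang_iff_reached:
  "scd_wf F \<Longrightarrow> s \<in> lang F \<longleftrightarrow> reached F s \<noteq> {}"
  unfolding lang_def reached_def using reaches_obs[of F] by (auto simp: scd_wf_def)

lemma outputs_nonempty: "scd_wf F \<Longrightarrow> s \<in> lang F \<Longrightarrow> outputs F s \<noteq> {}"
  using lang_iff_reached[of F s] reached_subset_states[of F s]
  unfolding outputs_def scd_wf_def by blast

section \<open>Renaming states\<close>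

definition rename_scd :: "('v \<Rightarrow> 'w) \<Rightarrow> ('v, 'y, 'c) scd \<Rightarrow> ('w, 'y, 'c) scd" where
  "rename_scd f G = \<lparr>states = f ` states G, init = f ` init G, obs = obs G,
     trans = (\<lambda>a b. trans G (inv_into (states G) f a) (inv_into (states G) f b)),
     outs = outs G, outf = (\<lambda>a. outf G (inv_into (states G) f a))\<rparr>"

lemma reaches_rename_scd:
  assumes "inj_on f (states G)" "v \<in> states G" "w \<in> states G"
  shows "reaches (rename_scd f G) (f v) s (f w) \<longleftrightarrow> reaches G v s w"
  using assms(2)
proof (induction s arbitrary: v)
  case Nil
  then show ?case using assms by (auto simp: inj_on_eq_iff)
next
  case (Cons y s)
  then show ?case using assms(1) by (auto simp: rename_scd_def)
qed

lemma reached_rename_scd: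
  assumes "inj_on f (states G)" "init G \<subseteq> states G"
  shows "reached (rename_scd f G) s = f ` reached G s"
proof -
  have "reached (rename_scd f G) s
      = f ` {w \<in> states G. \<exists>v\<in>init G. reaches (rename_scd f G) (f v) s (f w)}"
    unfolding reached_def by (auto simp: rename_scd_def)
  also have "\<dots> = f ` reached G s"
    unfolding reached_def using reaches_rename_scd[OF assms(1)] assms(2) by blast
  finally show ?thesis .
qed

lemma scd_wf_rename_scd:
  assumes "scd_wf G" "inj_on f (states G)"
  shows "scd_wf (rename_scd f G)"
  using assms unfolding scd_wf_def rename_scd_def by (auto simp: inv_into_f_f)

lemma lang_rename_scd:
  assumes "scd_wf G" "inj_on f (states G)"
  shows "lang (rename_scd f G) = lang G"
  using reached_rename_scd[OF assms(2)] assms(1) unfolding lang_def scd_wf_def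
  by (auto simp: rename_scd_def)

lemma outputs_rename_scd:
  assumes "scd_wf G" "inj_on f (states G)"
  shows "outputs (rename_scd f G) s = outputs G s"
proof -
  have "init G \<subseteq> states G" using assms(1) unfolding scd_wf_def by auto
  note reached = reached_rename_scd[OF assms(2) this]
  have "outputs (rename_scd f G) s = (\<Union>v\<in>reached G s. outf G (inv_into (states G) f (f v)))"
    unfolding outputs_def reached by (simp add: rename_scd_def image_image)
  also have "\<dots> = outputs G s"
    using reached_subset_states[of G s] inv_into_f_f[OF assms(2)]
    unfolding outputs_def by (auto simp: subset_iff)
  finally show ?thesis .
qed

lemma ex_nat_states_simulator:
  fixes G :: "('v, 'y, 'c) scd"
  assumes "scd_wf G" "output_simulates G F R"
  shows "\<exists>G' :: (nat, 'y, 'c) scd. scd_wf G' \<and> output_simulates G' F R"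
proof -
  have "finite (states G)" using assms(1) unfolding scd_wf_def by simp
  then obtain f :: "'v \<Rightarrow> nat" where f: "inj_on f (states G)"
    using finite_imp_inj_to_nat_seg by blast
  have "output_simulates (rename_scd f G) F R"
    using assms(2) unfolding output_simulates_def lang_rename_scd[OF assms(1) f]
      outputs_rename_scd[OF assms(1) f] .
  then show ?thesis using scd_wf_rename_scd[OF assms(1) f] by blast
qed

section \<open>Ignoring observations\<close>

definition ignore_obs :: "'y set \<Rightarrow> ('v, 'y, 'c) scd \<Rightarrow> ('v, 'y, 'c) scd" where
  "ignore_obs N G = G\<lparr>obs := obs G \<union> N,
     trans := (\<lambda>v w. (trans G v w - N) \<union> (if v = w then N else {}))\<rparr>"

lemma reaches_ignore_obs:
  "v \<in> states G \<Longrightarrow>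
   reaches (ignore_obs N G) v t w \<longleftrightarrow> reaches G v (erase N t) w"
proof (induction t arbitrary: v)
  case (Cons y t)
  have "y \<in> trans (ignore_obs N G) v u \<longleftrightarrow> (if y \<in> N then u = v else y \<in> trans G v u)" for u
    by (auto simp: ignore_obs_def)
  moreover have "states (ignore_obs N G) = states G" by (simp add: ignore_obs_def)
  ultimately show ?case using Cons by (cases "y \<in> N") auto
qed simp

lemma reached_ignore_obs:
  "init G \<subseteq> states G \<Longrightarrow> reached (ignore_obs N G) t = reached G (erase N t)"
  unfolding reached_def using reaches_ignore_obs[of _ G N t] by (auto simp: ignore_obs_def)

lemma scd_wf_ignore_obs: "scd_wf G \<Longrightarrow> finite N \<Longrightarrow> scd_wf (ignore_obs N G)"
  unfolding scd_wf_def ignore_obs_def by auto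

lemma erase_pump: "pump L N s t \<Longrightarrow> erase N t = erase N s"
proof (induction rule: pump.induct)
  case (pump_ins s t b k)
  then show ?case by (metis append_take_drop_id filter.simps(2) filter_append)
qed simp_all

lemma output_simulates_ignore_obs:
  assumes "scd_wf G" and sim: "output_simulates G F (shrink (lang F) N)"
  shows "output_simulates (ignore_obs N G) F (pump (lang F) N)"
proof -
  have init: "init G \<subseteq> states G" using assms(1) unfolding scd_wf_def by auto
  have "t \<in> lang (ignore_obs N G) \<and> outputs (ignore_obs N G) t \<subseteq> outputs F s"
    if s: "s \<in> lang F" and "pump (lang F) N s t" for s t
  proof
    have erase_t: "erase N t = erase N s"
      using \<open>pump (lang F) N s t\<close> by (rule erase_pump)
    have "shrink (lang F) N s (erase N s)" using s by (simp add: shrink_def)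
    then have lang_G: "erase N s \<in> lang G"
      and outputs_G: "outputs G (erase N s) \<subseteq> outputs F s"
      using sim s unfolding output_simulates_def by blast+
    have reached: "reached (ignore_obs N G) t = reached G (erase N s)"
      using reached_ignore_obs[OF init] erase_t by simp
    have "set t \<subseteq> set (erase N t) \<union> N" by auto
    then show "t \<in> lang (ignore_obs N G)"
      using lang_G erase_t reached unfolding lang_def by (auto simp: ignore_obs_def)
    show "outputs (ignore_obs N G) t \<subseteq> outputs F s"
      using outputs_G reached unfolding outputs_def by (simp add: ignore_obs_def)
  qed
  then show ?thesis unfolding output_simulates_def using pump_refl by blast
qed

section \<open>Padding and pumping\<close>

definition padded :: "'y set \<Rightarrow> 'y list \<Rightarrow> 'y list \<Rightarrow> bool" where
  "padded N = (\<lambda>u v. \<exists>p q b. b \<in> N \<and> u = p @ q \<and> v = p @ b # q)\<^sup>*\<^sup>*"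

lemma padded_refl: "padded N u u"
  unfolding padded_def by simp

lemma padded_trans: "padded N u v \<Longrightarrow> padded N v w \<Longrightarrow> padded N u w"
  unfolding padded_def by (rule rtranclp_trans)

lemma erase_padded: "padded N u v \<Longrightarrow> erase N v = erase N u"
  unfolding padded_def by (induction rule: rtranclp_induct) auto

lemma padded_append_left: "padded N u v \<Longrightarrow> padded N (p @ u) (p @ v)"
  unfolding padded_def
proof (induction rule: rtranclp_induct)
  case (step v v')
  then obtain p' q b where "b \<in> N" "v = p' @ q" "v' = p' @ b # q" by blast
  then have "b \<in> N \<and> p @ v = (p @ p') @ q \<and> p @ v' = (p @ p') @ b # q" by simp
  then have "\<exists>p'' q b. b \<in> N \<and> p @ v = p'' @ q \<and> p @ v' = p'' @ b # q" by blast
  with step.IH show ?case by (rule rtranclp.rtrancl_into_rtrancl)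
qed simp

lemma padded_prepend: "set w \<subseteq> N \<Longrightarrow> padded N u (w @ u)"
proof (induction w)
  case (Cons b w)
  have "padded N (w @ u) (b # w @ u)"
    unfolding padded_def using Cons.prems by (intro r_into_rtranclp) (auto intro: exI[of _ "[]"])
  with Cons show ?case by (auto intro: padded_trans)
qed (simp add: padded_refl)

lemma ex_common_padding_pair:
  "erase N a = erase N c \<Longrightarrow> \<exists>u. padded N a u \<and> padded N c u"
proof (induction a arbitrary: c)
  case Nil
  then have "erase N c = []" by simp
  then have "set c \<subseteq> N" by (auto simp: filter_empty_conv)
  then have "padded N [] c" using padded_prepend[of c N "[]"] by simp
  then show ?case using padded_refl by blast
next
  case (Cons x a)
  show ?case
  proof (cases "x \<in> N")
    case True
    then obtain u where u: "padded N a u" "padded N c u" using Cons by auto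
    have "padded N (x # a) (x # u)" using padded_append_left[OF u(1), of "[x]"] by simp
    moreover have "padded N c (x # u)"
      using padded_trans[OF u(2) padded_prepend[of "[x]"]] True by simp
    ultimately show ?thesis by blast
  next
    case False
    then have "erase N c = x # erase N a" using Cons.prems by simp
    then obtain w c' where c: "c = w @ x # c'" "set w \<subseteq> N" "erase N a = erase N c'"
      unfolding filter_eq_Cons_iff by blast
    then obtain u where u: "padded N a u" "padded N c' u" using Cons.IH by blast
    have "padded N (x # a) (w @ x # u)"
      using padded_trans[OF padded_append_left[OF u(1), of "[x]"] padded_prepend[OF c(2)]] by simp
    moreover have "padded N c (w @ x # u)"
      using padded_append_left[OF u(2), of "w @ [x]"] c(1) by simp
    ultimately show ?thesis by blast
  qed
qed

lemma ex_common_padding: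
  assumes "finite C" "C \<noteq> {}" "\<forall>c\<in>C. erase N c = f"
  shows "\<exists>u. erase N u = f \<and> (\<forall>c\<in>C. padded N c u)"
  using assms
proof (induction C rule: finite_ne_induct)
  case (singleton c)
  then show ?case using padded_refl by blast
next
  case (insert c C)
  then obtain u where u: "erase N u = f" "\<forall>c'\<in>C. padded N c' u" by auto
  obtain v where v: "padded N u v" "padded N c v"
    using ex_common_padding_pair[of N u c] u(1) insert.prems by auto
  have "erase N v = f" using erase_padded[OF v(1)] u(1) by simp
  then show ?case using u(2) v padded_trans by blast
qed

lemma pump_padded:
  assumes "pump L N s (x # u)" "padded N u v"
  shows "pump L N s (x # v)"
  using assms(2,1) unfolding padded_def
proof (induction rule: rtranclp_induct)
  case (step v v')
  then obtain p q b where pqb: "b \<in> N" "v = p @ q" "v' = p @ b # q" by blast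
  have "pump L N s (take (Suc (length p)) (x # v) @ b # drop (Suc (length p)) (x # v))"
    using step pqb(1) by (intro pump_ins) (auto simp: pqb(2))
  then show ?case using pqb by simp
qed

text \<open>Pumping never inserts in front of the first letter, hence the hypothesis on first letters.\<close>

lemma ex_common_pump:
  assumes "finite S" "S \<noteq> {}" "S \<subseteq> L"
    and "\<forall>s\<in>S. erase N s = f" "\<forall>s\<in>S. s \<noteq> [] \<longrightarrow> hd s \<notin> N"
  shows "\<exists>t. \<forall>s\<in>S. pump L N s t"
proof (cases f)
  case Nil
  have "s = []" if "s \<in> S" for s
  proof -
    have "erase N s = []" "s \<noteq> [] \<longrightarrow> hd s \<notin> N" using that assms(4,5) Nil by auto
    then show ?thesis by (cases s) auto
  qed
  then show ?thesis using pump_eps by blast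
next
  case (Cons x f')
  have S_Cons: "s = x # tl s \<and> erase N (tl s) = f'" if "s \<in> S" for s
  proof -
    have "erase N s = x # f'" "s \<noteq> [] \<longrightarrow> hd s \<notin> N" using that assms(4,5) Cons by auto
    then show ?thesis by (cases s) auto
  qed
  obtain u where u: "\<forall>c\<in>tl ` S. padded N c u"
    using ex_common_padding[of "tl ` S" N f'] assms(1,2) S_Cons by auto
  have "pump L N s (x # u)" if "s \<in> S" for s
    using pump_padded[OF _ u[rule_format]] pump_refl S_Cons that assms(3) by (metis image_eqI subsetD)
  then show ?thesis by blast
qed

section \<open>Deterministic devices\<close>

definition det_scd ::
  "'q set \<Rightarrow> 'q \<Rightarrow> 'y set \<Rightarrow> ('q \<Rightarrow> 'y \<Rightarrow> 'q) \<Rightarrow> ('q \<Rightarrow> 'c set) \<Rightarrow> ('q, 'y, 'c) scd" where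
  "det_scd Q q0 Y \<delta> out = \<lparr>states = Q, init = {q0}, obs = Y,
     trans = (\<lambda>q q'. {y \<in> Y. q' = \<delta> q y}), outs = UNIV, outf = out\<rparr>"

lemma det_scd_simps [simp]:
  "states (det_scd Q q0 Y \<delta> out) = Q" "init (det_scd Q q0 Y \<delta> out) = {q0}"
  "obs (det_scd Q q0 Y \<delta> out) = Y" "trans (det_scd Q q0 Y \<delta> out) q q' = {y \<in> Y. q' = \<delta> q y}"
  "outf (det_scd Q q0 Y \<delta> out) = out"
  by (simp_all add: det_scd_def)

context
  fixes Q :: "'q set" and \<delta> :: "'q \<Rightarrow> 'y \<Rightarrow> 'q" and Y :: "'y set"
  assumes \<delta>_closed: "\<forall>q\<in>Q. \<forall>y\<in>Y. \<delta> q y \<in> Q"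
begin

lemma foldl_closed: "q \<in> Q \<Longrightarrow> set t \<subseteq> Y \<Longrightarrow> foldl \<delta> q t \<in> Q"
  using \<delta>_closed by (induction t arbitrary: q) auto

lemma reaches_det_scd:
  "q \<in> Q \<Longrightarrow> reaches (det_scd Q q0 Y \<delta> out) q t q' \<longleftrightarrow> set t \<subseteq> Y \<and> q' = foldl \<delta> q t"
  using \<delta>_closed by (induction t arbitrary: q) auto

lemma reached_det_scd:
  "q0 \<in> Q \<Longrightarrow>
   reached (det_scd Q q0 Y \<delta> out) t = (if set t \<subseteq> Y then {foldl \<delta> q0 t} else {})"
  unfolding reached_def by (auto simp: reaches_det_scd foldl_closed)

lemma lang_det_scd: "q0 \<in> Q \<Longrightarrow> lang (det_scd Q q0 Y \<delta> out) = {t. set t \<subseteq> Y}"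
  unfolding lang_def by (simp add: reached_det_scd)

lemma outputs_det_scd:
  "q0 \<in> Q \<Longrightarrow> set t \<subseteq> Y \<Longrightarrow> outputs (det_scd Q q0 Y \<delta> out) t = out (foldl \<delta> q0 t)"
  unfolding outputs_def by (simp add: reached_det_scd)

lemma scd_wf_det_scd:
  "finite Q \<Longrightarrow> q0 \<in> Q \<Longrightarrow> finite Y \<Longrightarrow> \<forall>q\<in>Q. out q \<noteq> {} \<Longrightarrow>
   scd_wf (det_scd Q q0 Y \<delta> out)"
  unfolding scd_wf_def det_scd_def by auto

end

section \<open>The subset construction for the shrink\<close>

definition post :: "('v, 'y, 'c) scd \<Rightarrow> 'v set \<Rightarrow> 'y list \<Rightarrow> 'v set" where
  "post F R s = {w \<in> states F. \<exists>v\<in>R. reaches F v s w}"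

lemma reached_eq_post: "reached F s = post F (init F) s"
  unfolding reached_def post_def ..

lemma post_append:
  assumes "R \<subseteq> states F"
  shows "post F R (s @ u) = post F (post F R s) u"
proof -
  have "m \<in> states F" if "v \<in> R" "reaches F v s m" for v m
    using reaches_in_states[OF that(2)] that(1) assms by blast
  then show ?thesis unfolding post_def reaches_append by auto
qed

lemma lang_prefix:
  assumes "scd_wf F" "s @ u \<in> lang F"
  shows "s \<in> lang F"
proof -
  have "init F \<subseteq> states F" using assms(1) unfolding scd_wf_def by auto
  then have "post F (post F (init F) s) u \<noteq> {}"
    using assms lang_iff_reached post_append unfolding reached_eq_post by metis
  then show ?thesis using assms(1) lang_iff_reached unfolding reached_eq_post post_def by fastforce
qed

text \<open>
  A run of \<open>F\<close> on a string with shrink \<open>t @ [y]\<close> ends with \<open>y\<close> followed by a word over \<open>N\<close>;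
  the step for \<open>y\<close> absorbs that word.
\<close>

definition shrink_step :: "('v, 'y, 'c) scd \<Rightarrow> 'y set \<Rightarrow> 'v set set \<Rightarrow> 'y \<Rightarrow> 'v set set" where
  "shrink_step F N X y =
     {post F R (y # w) | R w. R \<in> X \<and> set w \<subseteq> N \<and> post F R (y # w) \<noteq> {}}"

definition shrink_family :: "('v, 'y, 'c) scd \<Rightarrow> 'y set \<Rightarrow> 'y list \<Rightarrow> 'v set set" where
  "shrink_family F N t = foldl (shrink_step F N) {init F} t"

lemma shrink_step_subset: "shrink_step F N X y \<subseteq> Pow (states F)"
  unfolding shrink_step_def post_def by blast

lemma shrink_family_snoc: "shrink_family F N (t @ [y]) = shrink_step F N (shrink_family F N t) y"
  unfolding shrink_family_def by simp

lemma shrink_family_subset: "init F \<subseteq> states F \<Longrightarrow> shrink_family F N t \<subseteq> Pow (states F)"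
  by (cases t rule: rev_cases) (auto simp: shrink_family_def dest!: subsetD[OF shrink_step_subset])

lemma reached_in_shrink_family:
  assumes wf: "scd_wf F" and first: "\<forall>s\<in>lang F. s \<noteq> [] \<longrightarrow> hd s \<notin> N"
  shows "s \<in> lang F \<Longrightarrow> reached F s \<in> shrink_family F N (erase N s)"
proof (induction s rule: rev_induct)
  case Nil
  show ?case using wf by (auto simp: reached_def shrink_family_def scd_wf_def)
next
  case (snoc x s)
  have init: "init F \<subseteq> states F" using wf unfolding scd_wf_def by auto
  have s: "s \<in> lang F" using lang_prefix[OF wf snoc.prems] .
  have nonempty: "reached F (s @ [x]) \<noteq> {}" using snoc.prems lang_iff_reached[OF wf] by blast
  have reached_snoc: "reached F (s @ [x]) = post F (reached F s) [x]"
    unfolding reached_eq_post using post_append[OF init] by blast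
  show ?case
  proof (cases "x \<in> N")
    case False
    have "post F (reached F s) [x] \<in> shrink_step F N (shrink_family F N (erase N s)) x"
      unfolding shrink_step_def using snoc.IH[OF s] nonempty reached_snoc by force
    then show ?thesis using False reached_snoc by (simp add: shrink_family_snoc)
  next
    case True
    have "s \<noteq> []" using first snoc.prems True by (cases s) auto
    then have "erase N s \<noteq> []" using first s by (cases s) auto
    then obtain t y where t: "erase N s = t @ [y]" by (metis rev_exhaust)
    have "reached F s \<in> shrink_step F N (shrink_family F N t) y"
      using snoc.IH[OF s] t by (simp add: shrink_family_snoc)
    then obtain R w
      where R: "reached F s = post F R (y # w)" "R \<in> shrink_family F N t" "set w \<subseteq> N"
      unfolding shrink_step_def by blast
    have "R \<subseteq> states F" using R(2) shrink_family_subset[OF init] by blast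
    then have "reached F (s @ [x]) = post F R (y # w @ [x])"
      using reached_snoc R(1) post_append[of R F "y # w" "[x]"] by simp
    then have "reached F (s @ [x]) \<in> shrink_step F N (shrink_family F N t) y"
      using R(2,3) True nonempty unfolding shrink_step_def by force
    then show ?thesis using True t by (simp add: shrink_family_snoc)
  qed
qed

lemma shrink_family_reached:
  assumes wf: "scd_wf F"
  shows "set t \<inter> N = {} \<Longrightarrow> R \<in> shrink_family F N t \<Longrightarrow>
    \<exists>s\<in>lang F. erase N s = t \<and> reached F s = R"
proof (induction t arbitrary: R rule: rev_induct)
  case Nil
  then have "reached F [] = R" and "R \<noteq> {}"
    using wf by (auto simp: reached_def shrink_family_def scd_wf_def)
  then show ?case using lang_iff_reached[OF wf, of "[]"] by (intro bexI[of _ "[]"]) auto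
next
  case (snoc y t)
  have init: "init F \<subseteq> states F" using wf unfolding scd_wf_def by auto
  have "R \<in> shrink_step F N (shrink_family F N t) y"
    using snoc.prems(2) by (simp add: shrink_family_snoc)
  then obtain R0 w
    where R: "R = post F R0 (y # w)" "R0 \<in> shrink_family F N t" "set w \<subseteq> N" "R \<noteq> {}"
    unfolding shrink_step_def by blast
  obtain s where s: "erase N s = t" "reached F s = R0"
    using snoc.IH[OF _ R(2)] snoc.prems(1) by auto
  have "reached F (s @ y # w) = R"
    using R(1) s(2) post_append[OF init] unfolding reached_eq_post by simp
  moreover have "erase N (s @ y # w) = t @ [y]"
    using s(1) R(3) snoc.prems(1) by (auto simp: filter_empty_conv)
  ultimately show ?case using R(4) lang_iff_reached[OF wf] by blast
qed

lemma shrink_family_eq_reached_image: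
  assumes "scd_wf F" "\<forall>s\<in>lang F. s \<noteq> [] \<longrightarrow> hd s \<notin> N" "set t \<inter> N = {}"
  shows "shrink_family F N t = reached F ` {s \<in> lang F. erase N s = t}"
  using shrink_family_reached[OF assms(1,3)] reached_in_shrink_family[OF assms(1,2)] by blast

definition common_outputs :: "('v, 'y, 'c) scd \<Rightarrow> 'v set set \<Rightarrow> 'c set" where
  "common_outputs F X = (\<Inter>R\<in>X. \<Union>v\<in>R. outf F v)"

lemma common_outputs_reached_image: "common_outputs F (reached F ` S) = (\<Inter>s\<in>S. outputs F s)"
  unfolding common_outputs_def outputs_def by simp

lemma common_outputs_shrink_family_nonempty:
  assumes wf: "scd_wf F" and first: "\<forall>s\<in>lang F. s \<noteq> [] \<longrightarrow> hd s \<notin> N"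
    and "scd_wf F'" and sim: "output_simulates F' F (pump (lang F) N)"
    and s: "s \<in> lang F"
  shows "common_outputs F (shrink_family F N (erase N s)) \<noteq> {}"
proof -
  define D where "D = shrink_family F N (erase N s)"
  have D: "D = reached F ` {s' \<in> lang F. erase N s' = erase N s}"
    unfolding D_def using shrink_family_eq_reached_image[OF wf first, of "erase N s"] by auto
  have "D \<subseteq> Pow (states F)" unfolding D by (simp add: image_subset_iff reached_subset_states)
  then have "finite D" using wf unfolding scd_wf_def by (meson finite_Pow_iff finite_subset)
  then obtain S
    where S: "S \<subseteq> {s' \<in> lang F. erase N s' = erase N s}" "finite S" "D = reached F ` S"
    using finite_subset_image[OF \<open>finite D\<close>, of "reached F" "{s' \<in> lang F. erase N s' = erase N s}"] D
    by blast
  have "S \<noteq> {}" using S(3) D s by blast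
  then obtain t where t: "\<forall>s'\<in>S. pump (lang F) N s' t"
    using ex_common_pump[of S "lang F" N "erase N s"] S(1,2) first by blast
  have "t \<in> lang F'" "outputs F' t \<subseteq> (\<Inter>s'\<in>S. outputs F s')"
    using \<open>S \<noteq> {}\<close> t S(1) sim unfolding output_simulates_def by blast+
  then have "outputs F' t \<subseteq> common_outputs F D" "outputs F' t \<noteq> {}"
    using outputs_nonempty[OF \<open>scd_wf F'\<close>] unfolding S(3) common_outputs_reached_image by auto
  then show ?thesis unfolding D_def by blast
qed

text \<open>
  The \<open>UNIV\<close> branch is never taken on shrinks of strings of \<open>L(F)\<close>
  (\<open>common_outputs_shrink_family_nonempty\<close>); elsewhere it keeps the outputs nonempty.
\<close>

definition shrink_simulator :: "('v, 'y, 'c) scd \<Rightarrow> 'y set \<Rightarrow> ('v set set, 'y, 'c) scd" where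
  "shrink_simulator F N = det_scd (Pow (Pow (states F))) {init F} (obs F - N) (shrink_step F N)
     (\<lambda>X. if common_outputs F X = {} then UNIV else common_outputs F X)"

lemma shrink_step_closed:
  "\<forall>X\<in>Pow (Pow (states F)). \<forall>y\<in>Y. shrink_step F N X y \<in> Pow (Pow (states F))"
  by (simp add: shrink_step_subset)

lemma
  assumes "scd_wf F"
  shows scd_wf_shrink_simulator: "scd_wf (shrink_simulator F N)"
    and lang_shrink_simulator: "lang (shrink_simulator F N) = {t. set t \<subseteq> obs F - N}"
    and outputs_shrink_simulator: "set t \<subseteq> obs F - N \<Longrightarrow>
      outputs (shrink_simulator F N) t = (if common_outputs F (shrink_family F N t) = {} then UNIV
        else common_outputs F (shrink_family F N t))"
proof -
  have init: "{init F} \<in> Pow (Pow (states F))" using assms unfolding scd_wf_def by auto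
  note det = scd_wf_det_scd[OF shrink_step_closed] lang_det_scd[OF shrink_step_closed init]
    outputs_det_scd[OF shrink_step_closed init]
  show "scd_wf (shrink_simulator F N)"
    unfolding shrink_simulator_def using assms init by (intro det) (auto simp: scd_wf_def)
  show "lang (shrink_simulator F N) = {t. set t \<subseteq> obs F - N}"
    unfolding shrink_simulator_def by (simp add: det)
  show "set t \<subseteq> obs F - N \<Longrightarrow>
      outputs (shrink_simulator F N) t = (if common_outputs F (shrink_family F N t) = {} then UNIV
        else common_outputs F (shrink_family F N t))"
    unfolding shrink_simulator_def shrink_family_def by (simp add: det)
qed

lemma output_simulates_shrink_simulator:
  assumes wf: "scd_wf F" and first: "\<forall>s\<in>lang F. s \<noteq> [] \<longrightarrow> hd s \<notin> N"
    and "scd_wf F'" and "output_simulates F' F (pump (lang F) N)"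
  shows "output_simulates (shrink_simulator F N) F (shrink (lang F) N)"
proof -
  have "erase N s \<in> lang (shrink_simulator F N) \<and>
      outputs (shrink_simulator F N) (erase N s) \<subseteq> outputs F s" if s: "s \<in> lang F" for s
  proof
    have obs: "set (erase N s) \<subseteq> obs F - N" using s unfolding lang_def by auto
    then show "erase N s \<in> lang (shrink_simulator F N)"
      by (simp add: lang_shrink_simulator[OF wf])
    have "outputs (shrink_simulator F N) (erase N s) = common_outputs F (shrink_family F N (erase N s))"
      using common_outputs_shrink_family_nonempty[OF assms s]
      by (simp add: outputs_shrink_simulator[OF wf obs])
    also have "\<dots> \<subseteq> outputs F s"
      using reached_in_shrink_family[OF wf first s] unfolding common_outputs_def outputs_def by blast
    finally show "outputs (shrink_simulator F N) (erase N s) \<subseteq> outputs F s" .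
  qed
  then show ?thesis unfolding output_simulates_def shrink_def by blast
qed

theorem theorem3:
  fixes F :: "('v, 'y, 'c) scd" and N :: "'y set"
  assumes "scd_wf F"
    and "N \<subseteq> obs F"
    and "\<forall>s\<in>lang F. s \<noteq> [] \<longrightarrow> hd s \<in> obs F - N"
  shows "(\<exists>F' :: (nat, 'y, 'c) scd. scd_wf F' \<and> output_simulates F' F (pump (lang F) N))
     \<longleftrightarrow> (\<exists>F' :: (nat, 'y, 'c) scd. scd_wf F' \<and> output_simulates F' F (shrink (lang F) N))"
proof
  assume "\<exists>F' :: (nat, 'y, 'c) scd. scd_wf F' \<and> output_simulates F' F (pump (lang F) N)"
  then obtain F' :: "(nat, 'y, 'c) scd"
    where "scd_wf F'" "output_simulates F' F (pump (lang F) N)" by blast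
  moreover have "\<forall>s\<in>lang F. s \<noteq> [] \<longrightarrow> hd s \<notin> N" using assms(3) by blast
  ultimately have "output_simulates (shrink_simulator F N) F (shrink (lang F) N)"
    using output_simulates_shrink_simulator[OF assms(1)] by blast
  with scd_wf_shrink_simulator[OF assms(1)]
  show "\<exists>F' :: (nat, 'y, 'c) scd. scd_wf F' \<and> output_simulates F' F (shrink (lang F) N)"
    by (rule ex_nat_states_simulator)
next
  assume "\<exists>F' :: (nat, 'y, 'c) scd. scd_wf F' \<and> output_simulates F' F (shrink (lang F) N)"
  then obtain G :: "(nat, 'y, 'c) scd"
    where "scd_wf G" "output_simulates G F (shrink (lang F) N)" by blast
  moreover have "finite N" using assms(1,2) finite_subset unfolding scd_wf_def by blast
  ultimately show "\<exists>F' :: (nat, 'y, 'c) scd. scd_wf F' \<and> output_simulates F' F (pump (lang F) N)"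
    using scd_wf_ignore_obs output_simulates_ignore_obs by blast
qed

end
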